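(* In the two-period difference-in-differences setting with anticipation described in the context, suppose $\mu_g$ and $\tau_g$ have different signs. Let $t^*$ satisfy $\Phi(t^* )-\Phi(-t^*/2)=\alpha$, where $\Phi$ is the standard normal CDF, and consider testing $H_0:\mu_g=0$ at level $\alpha$ using the confidence set $CS^\mu_\alpha$ defined in the context. If the t-statistic from the difference-in-differences model without anticipation, $\tilde t=\sqrt{n}\,\hat m_g/\hat\sigma_u$, satisfies $|\tilde t|>t^*$, then for any $\pi$, $0\notin CS^\mu_\alpha$.
   Context: Two periods $t\in\{0,1\}$, i.i.d. units $i=1,\dots,n$, observed treatment $D_i\in\{0,1\}$, unobserved anticipation $A_i\in\{0,1\}$, observed outcomes $Y_{i0},Y_{i1}$, known function $g$. $\mu_g=\mathbb{E}[g(Y_{i1}(1))-g(Y_{i1}(0))\mid D_i=1]$ is the treatment effect on the treated and $\tau_g=\mathbb{E}[g(Y_{i0}(1,1))-g(Y_{i0}(0,1))\mid D_i=1,A_i=1]$ the anticipatory effect, where $Y_{i0}(a,1)$ is the period-0 potential outcome of a treated unit with anticipation status $a$. When $\mu_g$ and $\tau_g$ have different signs, the identified set for $\mu_g$ is the interval with endpoints $m_g/(1+\pi)$ and $m_g$, where $m_g=\mathbb{E}[g(Y_{i1})-g(Y_{i0})\mid D_i=1]-\mathbb{E}[g(Y_{i1})-g(Y_{i0})\mid D_i=0]$ and $\pi\in(0,1)$ bounds $\mathbb{P}[A_i=1\mid D_i=1]$. Let $\hat m_g=\frac1{n_1}\sum_i[g(Y_{i1})-g(Y_{i0})]D_i-\frac1{n_0}\sum_i[g(Y_{i1})-g(Y_{i0})](1-D_i)$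 with $n_1=\sum_iD_i$, $n_0=n-n_1$, let $\hat\pi$ be a consistent estimator of $\pi$, and set the bound estimators $\hat m_g$ and $\hat m_g/(1+\hat\pi)$, with estimated asymptotic standard deviations $\hat\sigma_u$ (for $\hat m_g$) and $\hat\sigma_l=\hat\sigma_u/(1+\hat\pi)$. Let $\hat\sigma=\max\{\hat\sigma_l,\hat\sigma_u\}$, $\hat\mu_{g,l}=\min\{\hat m_g,\hat m_g/(1+\hat\pi)\}$, $\hat\mu_{g,u}=\max\{\hat m_g,\hat m_g/(1+\hat\pi)\}$, let $C_n$ solve $\Phi(C_n+\sqrt n(\hat\mu_{g,u}-\hat\mu_{g,l})/\hat\sigma)-\Phi(-C_n)=\alpha$, and $CS^\mu_\alpha=[\hat\mu_{g,l}-C_n\hat\sigma/\sqrt n,\ \hat\mu_{g,u}+C_n\hat\sigma/\sqrt n]$. *)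

theory Defs
  imports "HOL-Probability.Probability"
begin

definition Phi :: "real \<Rightarrow> real" where
  "Phi x = cdf (density lborel std_normal_density) x"

definition n1 :: "nat \<Rightarrow> (nat \<Rightarrow> real) \<Rightarrow> real" where
  "n1 n D = (\<Sum>i=1..n. D i)"

definition n0 :: "nat \<Rightarrow> (nat \<Rightarrow> real) \<Rightarrow> real" where
  "n0 n D = real n - n1 n D"

definition m_hat :: "(real \<Rightarrow> real) \<Rightarrow> nat \<Rightarrow> (nat \<Rightarrow> real) \<Rightarrow> (nat \<Rightarrow> real) \<Rightarrow> (nat \<Rightarrow> real) \<Rightarrow> real" where
  "m_hat g n D Y0 Y1 =
     (1 / n1 n D) * (\<Sum>i=1..n. (g (Y1 i) - g (Y0 i)) * D i)
   - (1 / n0 n D) * (\<Sum>i=1..n. (g (Y1 i) - g (Y0 i)) * (1 - D i))"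

definition CS_mu :: "nat \<Rightarrow> real \<Rightarrow> real \<Rightarrow> real \<Rightarrow> real \<Rightarrow> real set" where
  "CS_mu n m pih sig_u C =
     (let sig_l = sig_u / (1 + pih);
          sig = max sig_l sig_u;
          mu_l = min m (m / (1 + pih));
          mu_u = max m (m / (1 + pih))
      in {mu_l - C * sig / sqrt (real n) .. mu_u + C * sig / sqrt (real n)})"

definition is_crit_value :: "real \<Rightarrow> nat \<Rightarrow> real \<Rightarrow> real \<Rightarrow> real \<Rightarrow> real \<Rightarrow> bool" where
  "is_crit_value alpha n m pih sig_u C \<longleftrightarrow>
     (let sig_l = sig_u / (1 + pih);
          sig = max sig_l sig_u;
          mu_l = min m (m / (1 + pih));
          mu_u = max m (m / (1 + pih))
      in Phi (C + sqrt (real n) * (mu_u - mu_l) / sig) - Phi (- C) = alpha)"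

end

theory Submission
  imports Defs
begin

text \<open>
  Measure everything in units of \<open>\<sigma>\<^sub>u/\<surd>n\<close>: with \<open>w = \<surd>n |m|/\<sigma>\<^sub>u\<close> the confidence set excludes 0
  exactly when \<open>C < w/(1+\<pi>)\<close>. The map \<open>C \<mapsto> \<Phi>(C + w\<pi>/(1+\<pi>)) - \<Phi>(-C)\<close> is increasing, and at
  \<open>C = w/(1+\<pi>)\<close> it equals \<open>\<Phi>(w) - \<Phi>(-w/(1+\<pi>))\<close>, which for \<open>\<pi> \<le> 1\<close> and \<open>w > t\<^sup>*\<close> strictly
  exceeds \<open>\<Phi>(t\<^sup>*) - \<Phi>(-t\<^sup>*/2) = \<alpha>\<close>. Hence the critical value is below \<open>w/(1+\<pi>)\<close> for every \<open>\<pi> \<in> (0,1]\<close>.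
\<close>

lemma Phi_strict_mono: "strict_mono Phi"
proof (rule strict_monoI)
  fix x y :: real
  assume xy: "x < y"
  have dens_pos: "std_normal_density z > 0" for z
    by (rule normal_density_pos) simp
  interpret real_distribution std_normal_distribution by (rule real_dist_normal_dist)
  have diff: "Phi y - Phi x = measure std_normal_distribution {x<..y}"
    unfolding Phi_def by (rule cdf_diff_eq[OF xy])
  have "emeasure std_normal_distribution {x<..y} \<noteq> 0"
  proof
    assume "emeasure std_normal_distribution {x<..y} = 0"
    then have "(\<integral>\<^sup>+ z. ennreal (std_normal_density z) * indicator {x<..y} z \<partial>lborel) = 0"
      by (simp add: emeasure_density)
    then have "AE z in lborel. ennreal (std_normal_density z) * indicator {x<..y} z = 0"
      by (subst (asm) nn_integral_0_iff_AE) auto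
    then have "AE z in lborel. z \<notin> {x<..y}"
      by eventually_elim (auto simp: indicator_def dens_pos[THEN dual_order.strict_implies_not_eq])
    then have "emeasure lborel {x<..y} = 0"
      by (subst (asm) AE_iff_measurable[OF _ refl]) (auto simp: greaterThanAtMost_def greaterThan_def atMost_def Int_def)
    with xy show False by simp
  qed
  then have "measure std_normal_distribution {x<..y} > 0"
    by (simp add: emeasure_eq_measure zero_less_measure_iff)
  with diff show "Phi x < Phi y" by simp
qed

lemma Phi_less_iff: "Phi x < Phi y \<longleftrightarrow> x < y"
  using Phi_strict_mono by (rule strict_mono_less)

lemma crit_value_less:
  fixes C w p t :: real
  assumes crit: "Phi (C + w * p / (1 + p)) - Phi (- C) = Phi t - Phi (- t / 2)"
    and "0 \<le> w" "t < w" "0 \<le> p" "p \<le> 1"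
  shows "C < w / (1 + p)"
proof (rule ccontr)
  assume "\<not> C < w / (1 + p)"
  then have C_ge: "w / (1 + p) \<le> C" by simp
  have "w / (1 + p) + w * p / (1 + p) = w * (1 + p) / (1 + p)"
    by (simp add: add_divide_distrib distrib_left)
  also have "\<dots> = w"
    using assms(4) by simp
  finally have "w / (1 + p) + w * p / (1 + p) = w" .
  with C_ge have "t < C + w * p / (1 + p)"
    using assms(3) by linarith
  moreover have "w / 2 \<le> w / (1 + p)"
    using assms(2,4,5) by (intro divide_left_mono) auto
  with C_ge have "- C < - t / 2"
    using assms(3) by linarith
  ultimately have "Phi t - Phi (- t / 2) < Phi (C + w * p / (1 + p)) - Phi (- C)"
    by (simp add: Phi_less_iff diff_strict_mono)
  with crit show False by simp
qed

lemma max_min_div_one_plus_diff: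
  fixes m p :: real
  assumes "0 \<le> p"
  shows "max m (m / (1 + p)) - min m (m / (1 + p)) = \<bar>m\<bar> * p / (1 + p)"
proof (cases "0 \<le> m")
  case True
  then have "m / (1 + p) \<le> m" using assms by (simp add: divide_le_eq distrib_left)
  with True assms show ?thesis by (simp add: field_simps)
next
  case False
  then have "m \<le> m / (1 + p)" using assms by (simp add: le_divide_eq)
  with False assms show ?thesis by (simp add: field_simps)
qed

lemma is_crit_value_iff:
  assumes "0 \<le> pih" "0 < sig_u"
  shows "is_crit_value alpha n m pih sig_u C \<longleftrightarrow>
    Phi (C + sqrt (real n) * \<bar>m\<bar> / sig_u * pih / (1 + pih)) - Phi (- C) = alpha"
proof -
  have "max (sig_u / (1 + pih)) sig_u = sig_u"
    using assms by (simp add: divide_le_eq)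
  then show ?thesis
    unfolding is_crit_value_def Let_def max_min_div_one_plus_diff[OF assms(1)]
    by (simp add: ac_simps)
qed

lemma zero_notin_CS_mu_iff:
  assumes "0 \<le> pih" "0 < sig_u"
  shows "0 \<notin> CS_mu n m pih sig_u C \<longleftrightarrow> C * sig_u / sqrt (real n) < \<bar>m\<bar> / (1 + pih)"
proof -
  have sig: "max (sig_u / (1 + pih)) sig_u = sig_u"
    using assms by (simp add: divide_le_eq)
  show ?thesis
  proof (cases "0 \<le> m")
    case True
    then have "m / (1 + pih) \<le> m" "0 \<le> m / (1 + pih)"
      using assms by (simp_all add: divide_le_eq distrib_left)
    with True assms show ?thesis
      unfolding CS_mu_def Let_def sig by (auto simp: min_def max_def)
  next
    case False
    then have "m \<le> m / (1 + pih)" "m / (1 + pih) \<le> 0" "\<bar>m\<bar> = - m"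
      using assms by (simp_all add: le_divide_eq divide_le_0_iff)
    then show ?thesis
      unfolding CS_mu_def Let_def sig by (auto simp: min_def max_def)
  qed
qed

theorem corollary1:
  fixes n :: nat and D Y0 Y1 :: "nat \<Rightarrow> real" and g :: "real \<Rightarrow> real"
    and mu_g tau_g pi_hat sigma_u_hat alpha t_star C :: real
  assumes D01: "\<forall>i\<in>{1..n}. D i \<in> {0, 1}"
    and treated: "n1 n D > 0" and control: "n0 n D > 0"
    and signs: "mu_g * tau_g < 0"
    and alpha: "0 < alpha" "alpha < 1"
    and pi_hat: "0 < pi_hat" "pi_hat < 1"
    and sigma: "sigma_u_hat > 0"
    and tstar: "Phi t_star - Phi (- t_star / 2) = alpha"
    and C: "is_crit_value alpha n (m_hat g n D Y0 Y1) pi_hat sigma_u_hat C"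
    and t_big: "\<bar>sqrt (real n) * m_hat g n D Y0 Y1 / sigma_u_hat\<bar> > t_star"
  shows "0 \<notin> CS_mu n (m_hat g n D Y0 Y1) pi_hat sigma_u_hat C"
proof -
  define m where "m = m_hat g n D Y0 Y1"
  define w where "w = sqrt (real n) * \<bar>m\<bar> / sigma_u_hat"
  have "n > 0"
    using treated by (cases "n = 0") (auto simp: n1_def)
  have crit: "Phi (C + w * pi_hat / (1 + pi_hat)) - Phi (- C) = Phi t_star - Phi (- t_star / 2)"
    using C is_crit_value_iff[of pi_hat sigma_u_hat] pi_hat sigma tstar
    by (simp add: w_def m_def)
  have "t_star < w"
    using t_big sigma by (simp add: w_def m_def abs_mult)
  have "C < w / (1 + pi_hat)"
    using pi_hat sigma by (intro crit_value_less[OF crit _ \<open>t_star < w\<close>]) (auto simp: w_def)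
  then have "C * (sigma_u_hat * (1 + pi_hat)) < sqrt (real n) * \<bar>m\<bar>"
    using sigma pi_hat by (simp add: w_def pos_less_divide_eq)
  then have "C * sigma_u_hat / sqrt (real n) < \<bar>m\<bar> / (1 + pi_hat)"
    using \<open>n > 0\<close> pi_hat by (simp add: field_simps)
  then show ?thesis
    using zero_notin_CS_mu_iff pi_hat sigma by (simp add: m_def)
qed

end
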